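(* Let $\mathbb{A}$ be a countable homogeneous structure, $\mathbb{F}$ a field, $d\ge1$, and $\mathscr{B}$ a family of finite substructures of $\mathbb{A}$ such that every finite substructure of $\mathbb{A}$ is a substructure of some $\mathbb{B}\in\mathscr{B}$. Then the length of $\operatorname{Lin}_{\mathbb{F}}\mathbb{A}^d$ (with respect to $\operatorname{Aut}(\mathbb{A})$) is at most $\sup_{\mathbb{B}\in\mathscr{B}}$ of the length of $\operatorname{Lin}_{\mathbb{F}}\mathbb{B}^d$ (with respect to $\operatorname{Aut}(\mathbb{B})$).
   Context: Homogeneous: every isomorphism between finite substructures extends to an automorphism. For a group $G$ acting on a set $X$, $\operatorname{Lin}_{\mathbb{F}}X$ is the space of finite formal linear combinations of elements of $X$ with the induced linear $G$-action; the length of $\operatorname{Lin}_{\mathbb{F}}X$ with respect to $G$ is the supremum of $n$ such that there is a chain $V_0\subsetneq\dots\subsetneq V_n$ of $G$-invariant subspaces. Here $G=\operatorname{Aut}(\mathbb{A})$ acts on $\mathbb{A}^d$ and $\operatorname{Aut}(\mathbb{B})$ on $\mathbb{B}^d$ componentwise. *)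

theory Defs
  imports Main "HOL-Library.Extended_Nat" "HOL-Library.Countable_Set"
begin

text \<open>Relational structures: a domain S :: 'a set together with an interpretation
  rel :: 'r \<Rightarrow> 'a list \<Rightarrow> bool of the relation symbols (a tuple is a list).
  The induced substructure on a subset C of S carries the same rel restricted to
  tuples from C.\<close>

definition iso_sub :: "('r \<Rightarrow> 'a list \<Rightarrow> bool) \<Rightarrow> 'a set \<Rightarrow> 'a set \<Rightarrow> ('a \<Rightarrow> 'a) \<Rightarrow> bool" where
  "iso_sub rel C D f \<longleftrightarrow> bij_betw f C D \<and>
     (\<forall>R xs. set xs \<subseteq> C \<longrightarrow> (rel R (map f xs) \<longleftrightarrow> rel R xs))"

definition aut :: "'a set \<Rightarrow> ('r \<Rightarrow> 'a list \<Rightarrow> bool) \<Rightarrow> ('a \<Rightarrow> 'a) set" where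
  "aut S rel = {g. iso_sub rel S S g}"

definition homogeneous :: "'a set \<Rightarrow> ('r \<Rightarrow> 'a list \<Rightarrow> bool) \<Rightarrow> bool" where
  "homogeneous S rel \<longleftrightarrow>
     (\<forall>C D f. finite C \<and> C \<subseteq> S \<and> D \<subseteq> S \<and> iso_sub rel C D f \<longrightarrow>
        (\<exists>g\<in>aut S rel. \<forall>x\<in>C. g x = f x))"

definition tuples :: "nat \<Rightarrow> 'a set \<Rightarrow> 'a list set" where
  "tuples d S = {xs. length xs = d \<and> set xs \<subseteq> S}"

text \<open>Lin_F X: finitely supported functions X \<rightarrow> F (formal finite linear combinations).\<close>
definition lin :: "'x set \<Rightarrow> ('x \<Rightarrow> 'k::field) set" where
  "lin X = {v. finite {x. v x \<noteq> 0} \<and> (\<forall>x. x \<notin> X \<longrightarrow> v x = 0)}"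

text \<open>G-invariant subspaces of Lin_F X, G a group of permutations of X
  (acting on coefficient functions by precomposition).\<close>
definition inv_subspace :: "'x set \<Rightarrow> ('x \<Rightarrow> 'x) set \<Rightarrow> ('x \<Rightarrow> 'k::field) set \<Rightarrow> bool" where
  "inv_subspace X G W \<longleftrightarrow> W \<subseteq> lin X \<and> (\<lambda>x. 0) \<in> W \<and>
     (\<forall>v\<in>W. \<forall>w\<in>W. (\<lambda>x. v x + w x) \<in> W) \<and>
     (\<forall>c. \<forall>v\<in>W. (\<lambda>x. c * v x) \<in> W) \<and>
     (\<forall>g\<in>G. \<forall>v\<in>W. (\<lambda>x. if x \<in> X then v (g x) else 0) \<in> W)"

definition lin_length :: "'k::field itself \<Rightarrow> 'x set \<Rightarrow> ('x \<Rightarrow> 'x) set \<Rightarrow> enat" where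
  "lin_length TYPE('k) X G = Sup {enat n | n. \<exists>V :: nat \<Rightarrow> ('x \<Rightarrow> 'k) set.
      (\<forall>i\<le>n. inv_subspace X G (V i)) \<and> (\<forall>i<n. V i \<subset> V (Suc i))}"

definition struct_lin_length :: "'k::field itself \<Rightarrow> nat \<Rightarrow> 'a set \<Rightarrow> ('r \<Rightarrow> 'a list \<Rightarrow> bool) \<Rightarrow> enat" where
  "struct_lin_length K d S rel = lin_length K (tuples d S) (map ` aut S rel)"

end

theory Submission
  imports Defs
begin

text \<open>A strict chain of invariant subspaces of Lin A^d is witnessed by finitely many vectors,
  whose supports involve only finitely many points of A; these lie in some B from the family.
  Intersecting the chain with Lin B^d keeps it strict, and the intersections are Aut(B)-invariant
  because, by homogeneity, every automorphism of B extends to one of A, and an extension maps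
  tuples leaving B to tuples leaving B, so on Lin B^d both act alike.\<close>

lemma finite_tuples: "finite B \<Longrightarrow> finite (tuples d B)"
  unfolding tuples_def using finite_lists_length_eq[of B d] by (simp add: conj_commute)

lemma tuples_mono: "B \<subseteq> A \<Longrightarrow> tuples d B \<subseteq> tuples d A"
  unfolding tuples_def by auto

lemma lin_mono: "X \<subseteq> Y \<Longrightarrow> lin X \<subseteq> lin Y"
  unfolding lin_def by auto

lemma lin_add:
  assumes "v \<in> lin X" "w \<in> lin X"
  shows "(\<lambda>x. v x + w x) \<in> lin X"
proof -
  have "{x. v x + w x \<noteq> 0} \<subseteq> {x. v x \<noteq> 0} \<union> {x. w x \<noteq> 0}" by auto
  with assms show ?thesis unfolding lin_def by (auto intro: finite_subset)
qed

lemma lin_scale: "v \<in> lin X \<Longrightarrow> (\<lambda>x. c * v x) \<in> lin X"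
  unfolding lin_def by (auto intro: finite_subset[of "{x. c * v x \<noteq> 0}" "{x. v x \<noteq> 0}"])

lemma lin_restrict: "finite X \<Longrightarrow> (\<lambda>x. if x \<in> X then f x else 0) \<in> lin X"
  unfolding lin_def by (auto intro: finite_subset)

lemma inv_subspace_Int_lin:
  assumes V: "inv_subspace X G V" and Y: "finite Y"
    and act: "\<And>h v. h \<in> H \<Longrightarrow> v \<in> V \<inter> lin Y \<Longrightarrow> (\<lambda>x. if x \<in> Y then v (h x) else 0) \<in> V"
  shows "inv_subspace Y H (V \<inter> lin Y)"
proof -
  have "(\<lambda>x. 0) \<in> lin Y" unfolding lin_def by simp
  moreover have "(\<lambda>x. if x \<in> Y then v (h x) else 0) \<in> V \<inter> lin Y"
    if "h \<in> H" "v \<in> V \<inter> lin Y" for h v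
    using act[OF that] lin_restrict[OF Y, of "\<lambda>x. v (h x)"] by simp
  ultimately show ?thesis
    using V unfolding inv_subspace_def by (auto simp: lin_add lin_scale)
qed

lemma homogeneous_extend_aut:
  assumes "homogeneous A rel" "finite B" "B \<subseteq> A" "h \<in> aut B rel"
  obtains g where "g \<in> aut A rel" "\<forall>x\<in>B. g x = h x"
  using assms unfolding homogeneous_def aut_def by blast

lemma bij_betw_image_outside:
  assumes "bij_betw g A A" "g ` B = B" "B \<subseteq> A" "y \<in> A - B"
  shows "g y \<notin> B"
  using assms unfolding bij_betw_def inj_on_def by (metis Diff_iff imageE subsetD)

lemma action_extension_eq:
  assumes g: "bij_betw g A A" and h: "bij_betw h B B" and BA: "B \<subseteq> A"
    and gh: "\<forall>x\<in>B. g x = h x" and v: "v \<in> lin (tuples d B)"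
  shows "(\<lambda>xs. if xs \<in> tuples d B then v (map h xs) else 0)
       = (\<lambda>xs. if xs \<in> tuples d A then v (map g xs) else 0)"
proof
  fix xs
  have gB: "g ` B = B" using gh h by (simp add: bij_betw_def image_def)
  consider "xs \<in> tuples d B" | "xs \<in> tuples d A - tuples d B" | "xs \<notin> tuples d A"
    by blast
  then show "(if xs \<in> tuples d B then v (map h xs) else 0)
           = (if xs \<in> tuples d A then v (map g xs) else 0)"
  proof cases
    case 1
    then have "map h xs = map g xs" using gh unfolding tuples_def by (auto intro!: map_cong)
    with 1 tuples_mono[OF BA] show ?thesis by (auto simp del: map_eq_conv)
  next
    case 2
    then obtain y where "y \<in> set xs" "y \<in> A - B" unfolding tuples_def by auto
    then have "map g xs \<notin> tuples d B"
      using bij_betw_image_outside[OF g gB BA] unfolding tuples_def by auto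
    with v 2 show ?thesis unfolding lin_def by auto
  next
    case 3
    with tuples_mono[OF BA] show ?thesis by auto
  qed
qed

lemma inv_subspace_restrict_substructure:
  fixes V :: "('a list \<Rightarrow> 'k::field) set"
  assumes V: "inv_subspace (tuples d A) (map ` aut A rel) V"
    and hom: "homogeneous A rel" and B: "finite B" "B \<subseteq> A"
  shows "inv_subspace (tuples d B) (map ` aut B rel) (V \<inter> lin (tuples d B))"
proof (rule inv_subspace_Int_lin[OF V finite_tuples[OF B(1)]])
  fix mh v assume "mh \<in> map ` aut B rel" and v: "v \<in> V \<inter> lin (tuples d B)"
  then obtain h where mh: "mh = map h" and h: "h \<in> aut B rel" by blast
  obtain g where g: "g \<in> aut A rel" and gh: "\<forall>x\<in>B. g x = h x"
    using homogeneous_extend_aut[OF hom B h] .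
  have "bij_betw g A A" "bij_betw h B B"
    using g h by (simp_all add: aut_def iso_sub_def)
  then have "(\<lambda>xs. if xs \<in> tuples d B then v (map h xs) else 0)
           = (\<lambda>xs. if xs \<in> tuples d A then v (map g xs) else 0)"
    using action_extension_eq[OF _ _ B(2) gh] v by blast
  moreover have "(\<lambda>xs. if xs \<in> tuples d A then v (map g xs) else 0) \<in> V"
    using V g v unfolding inv_subspace_def by blast
  ultimately show "(\<lambda>xs. if xs \<in> tuples d B then v (mh xs) else 0) \<in> V"
    unfolding mh by metis
qed

lemma lin_tuples_finite_support:
  assumes "finite W" "W \<subseteq> lin (tuples d A)"
  obtains C where "finite C" "C \<subseteq> A" "W \<subseteq> lin (tuples d C)"
proof
  let ?C = "\<Union>v\<in>W. \<Union>xs\<in>{xs. v xs \<noteq> 0}. set xs"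
  show "finite ?C" using assms unfolding lin_def by auto
  show "?C \<subseteq> A" using assms unfolding lin_def tuples_def by fastforce
  show "W \<subseteq> lin (tuples d ?C)" using assms unfolding lin_def tuples_def by fastforce
qed

lemma strict_chain_finite_support:
  assumes "\<forall>i\<le>n. V i \<subseteq> lin (tuples d A)" "\<forall>i<n. V i \<subset> V (Suc i)"
  obtains C w where "finite C" "C \<subseteq> A" "\<forall>i<n. w i \<in> V (Suc i) - V i"
    "\<forall>i<n. w i \<in> lin (tuples d C)"
proof -
  have "\<forall>i<n. \<exists>u. u \<in> V (Suc i) - V i" using assms(2) by blast
  then obtain w where w: "\<forall>i<n. w i \<in> V (Suc i) - V i" by metis
  then have "w ` {..<n} \<subseteq> lin (tuples d A)"
    using assms(1) by (auto simp: image_subset_iff) (meson Suc_leI subsetD)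
  then obtain C where "finite C" "C \<subseteq> A" "w ` {..<n} \<subseteq> lin (tuples d C)"
    by (rule lin_tuples_finite_support[OF finite_imageI[OF finite_lessThan]])
  with w that show thesis by (simp add: image_subset_iff)
qed

lemma strict_chain_Int:
  assumes "\<forall>i<n. V i \<subseteq> V (Suc i)" "\<forall>i<n. w i \<in> V (Suc i) - V i" "\<forall>i<n. w i \<in> Y"
  shows "\<forall>i<n. V i \<inter> Y \<subset> V (Suc i) \<inter> Y"
  using assms by blast

lemma lin_length_geI:
  fixes V :: "nat \<Rightarrow> ('x \<Rightarrow> 'k::field) set"
  assumes "\<forall>i\<le>n. inv_subspace X G (V i)" "\<forall>i<n. V i \<subset> V (Suc i)"
  shows "enat n \<le> lin_length TYPE('k) X G"
  unfolding lin_length_def using assms by (intro Sup_upper) blast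

theorem mainTheorem5:
  fixes A :: "'a set" and rel :: "'r \<Rightarrow> 'a list \<Rightarrow> bool" and d :: nat
    and \<B> :: "'a set set"
  assumes "countable A"
    and "homogeneous A rel"
    and "d \<ge> 1"
    and "\<forall>B\<in>\<B>. finite B \<and> B \<subseteq> A"
    and "\<forall>C. finite C \<and> C \<subseteq> A \<longrightarrow> (\<exists>B\<in>\<B>. C \<subseteq> B)"
  shows "struct_lin_length TYPE('k::field) d A rel
           \<le> (SUP B\<in>\<B>. struct_lin_length TYPE('k) d B rel)"
  unfolding struct_lin_length_def lin_length_def[of "tuples d A"]
proof (rule Sup_least, clarify)
  fix n and V :: "nat \<Rightarrow> ('a list \<Rightarrow> 'k) set"
  assume inv: "\<forall>i\<le>n. inv_subspace (tuples d A) (map ` aut A rel) (V i)"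
    and strict: "\<forall>i<n. V i \<subset> V (Suc i)"
  have "\<forall>i\<le>n. V i \<subseteq> lin (tuples d A)" using inv unfolding inv_subspace_def by simp
  then obtain C w where C: "finite C" "C \<subseteq> A" and w: "\<forall>i<n. w i \<in> V (Suc i) - V i"
    and wC: "\<forall>i<n. w i \<in> lin (tuples d C)"
    using strict by (rule strict_chain_finite_support)
  obtain B where B: "B \<in> \<B>" "C \<subseteq> B" using assms(5) C by blast
  then have B_sub: "finite B" "B \<subseteq> A" using assms(4) by auto
  have "\<forall>i<n. w i \<in> lin (tuples d B)" using wC lin_mono[OF tuples_mono[OF B(2)]] by blast
  then have "\<forall>i<n. V i \<inter> lin (tuples d B) \<subset> V (Suc i) \<inter> lin (tuples d B)"
    using strict strict_chain_Int[OF _ w] by (simp add: less_imp_le)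
  moreover have "\<forall>i\<le>n. inv_subspace (tuples d B) (map ` aut B rel) (V i \<inter> lin (tuples d B))"
    using inv_subspace_restrict_substructure[OF _ assms(2) B_sub] inv by blast
  ultimately have "enat n \<le> lin_length TYPE('k) (tuples d B) (map ` aut B rel)"
    by (intro lin_length_geI)
  then show "enat n \<le> (SUP B\<in>\<B>. lin_length TYPE('k) (tuples d B) (map ` aut B rel))"
    using B(1) by (auto intro: SUP_upper2)
qed

end
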